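(* Let $\mathbb{X}$ be a basic reverse differential restriction category with countable disjoint joins. Let the following be given: - maps $b_T,b_F:\Gamma\times U\to 1$ such that $\overline{b_T}\,\overline{b_F}$ is nowhere defined; - maps $m,n:\Gamma\times U\to T$; - maps $a:\Gamma\to U$ and $v:\Gamma\to T$. Then $$\langle\langle 1_\Gamma,a\rangle,v\rangle\,R\big[\overline{b_T}\,m\vee\overline{b_F}\,n\big]\,\pi_1 =\overline{\langle 1_\Gamma,a\rangle b_T}\,\langle\langle 1_\Gamma,a\rangle,v\rangle R[m]\pi_1\ \vee\ \overline{\langle 1_\Gamma,a\rangle b_F}\,\langle\langle 1_\Gamma,a\rangle,v\rangle R[n]\pi_1 .$$ In the language SDPL, this is the statement that $$[\![v.\mathrm{rd}(x{:}U.\ \texttt{if } b \texttt{ then } m\texttt{ else } n)(a)]\!]=[\![\texttt{if }(\texttt{let } x=a\texttt{ in } b)\texttt{ then } v.\mathrm{rd}(x{:}U.m)(a)\texttt{ else } v.\mathrm{rd}(x{:}U.n)(a)]\!].$$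
   Context: Composition is written in diagrammatic order: $fg$ means "first $f$, then $g$". A restriction category is a category with an operation sending each $f:A\to B$ to a map $\bar f:A\to A$ such that $\bar f f=f$, $\bar f\bar g=\bar g\bar f$ (for $f,g$ with common domain), $\overline{\bar f g}=\bar f\bar g$, and $f\bar g=\overline{fg}\,f$. A map $f$ is total if $\bar f=1$. For parallel maps: - $f\le g$ means $\bar f g=f$; - a nowhere-defined map $\emptyset$ is a least element for $\le$; - $f,g$ are disjoint if $\bar f g$ is nowhere defined; - the join $\bigvee_i f_i$ of a family is its least upper bound for $\le$. "Countable disjoint joins" means that every countable family of pairwise disjoint parallel maps has a join, and composition preserves such joins on both sides: $h(\bigvee_i f_i)k=\bigvee_i hf_ik$. The category has restriction products if: - there is an object $1$ with a total map $!_A:A\to 1$ for each $A$ such that every $f:A\to1$ equals $\bar f\,!_A$; - for all $A,B$ there is an object $A\times B$ with total maps $\pi_0,\pi_1$ such that for all $f:C\to A$, $g:C\to B$ there is a unique $\langle f,g\rangle$ with $\langle f,g\rangle\pi_0=\bar g f$ and $\langle f,g\rangle\pi_1=\bar f g$. Write $f\times g=\langle\pi_0f,\pi_1g\rangle$. A Cartesian left additive restriction category is a restriction category with restriction products in which every hom-set is a commutative monoid $(+,0)$ such that: - $\overline{f+g}=\bar f\bar g$ and $\bar 0=1$; - $x(f+g)=xf+xg$ and $x0=\bar x 0$; - $(f+g)\pi_i=f\pi_i+g\pi_i$ and $0\pi_i=0$. Write $\iota_0=\langle 1,0\rangle$ and $\iota_1=\langle 0,1\rangle$. A basic reverse differential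 restriction category is a Cartesian left additive restriction category with an operation sending each $f:A\to B$ to $R[f]:A\times B\to A$ satisfying: - [RD.1] $R[f+g]=R[f]+R[g]$ and $R[0]=0$. - [RD.2] $\langle a,b+c\rangle R[f]=\langle a,b\rangle R[f]+\langle a,c\rangle R[f]$ and $\langle a,0\rangle R[f]=\overline{af}\,0$. - [RD.3] $R[\pi_j]=\pi_1\iota_j$. - [RD.4] $R[\langle f,g\rangle]=(1\times\pi_0)R[f]+(1\times\pi_1)R[g]$. - [RD.5] $R[fg]=\langle\pi_0,\langle\pi_0f,\pi_1\rangle R[g]\rangle R[f]$. - [RD.8] $\overline{R[f]}=\bar f\times 1$. - [RD.9] $R[\bar f]=(\bar f\times1)\pi_1$. Semantics of SDPL used in the second formulation: - A predicate $b$ in context $\Gamma,x{:}U$ is interpreted by a pair $(b_T,b_F)$ of maps $\Gamma\times U\to 1$ with disjoint restrictions. - $[\![\texttt{if } b\texttt{ then }m\texttt{ else }n]\!]=\overline{b_T}[\![m]\!]\vee\overline{b_F}[\![n]\!]$. - $[\![\texttt{let } x=a\texttt{ in } b]\!]_H=\langle 1,[\![a]\!]\rangle b_H$ for $H\in\{T,F\}$. - $[\![v.\mathrm{rd}(x.m)(a)]\!]=\langle\langle 1,[\![a]\!]\rangle,[\![v]\!]\rangle R[[\![m]\!]]\pi_1$. *)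

theory Defs
  imports Main "HOL-Library.Countable_Set"
begin

text \<open>A (small) category presented by an object set, an arrow set, domain/codomain,
  diagrammatic composition (Comp f g = "first f, then g"), identities, together with
  the extra structure of a basic reverse differential restriction category.\<close>

record ('o, 'a) rdrc =
  Obj  :: "'o set"
  Arr  :: "'a set"
  Dom  :: "'a \<Rightarrow> 'o"
  Cod  :: "'a \<Rightarrow> 'o"
  Comp :: "'a \<Rightarrow> 'a \<Rightarrow> 'a"
  Id   :: "'o \<Rightarrow> 'a"
  Rst  :: "'a \<Rightarrow> 'a"
  Term :: "'o"
  Bang :: "'o \<Rightarrow> 'a"
  Prod :: "'o \<Rightarrow> 'o \<Rightarrow> 'o"
  P0   :: "'o \<Rightarrow> 'o \<Rightarrow> 'a"
  P1   :: "'o \<Rightarrow> 'o \<Rightarrow> 'a"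
  Pair :: "'a \<Rightarrow> 'a \<Rightarrow> 'a"
  Add  :: "'a \<Rightarrow> 'a \<Rightarrow> 'a"
  Zero :: "'o \<Rightarrow> 'o \<Rightarrow> 'a"
  RD   :: "'a \<Rightarrow> 'a"

definition hom :: "('o,'a,'z) rdrc_scheme \<Rightarrow> 'o \<Rightarrow> 'o \<Rightarrow> 'a set" where
  "hom X A B = {f \<in> Arr X. Dom X f = A \<and> Cod X f = B}"

definition total :: "('o,'a,'z) rdrc_scheme \<Rightarrow> 'a \<Rightarrow> bool" where
  "total X f \<longleftrightarrow> Rst X f = Id X (Dom X f)"

definition rle :: "('o,'a,'z) rdrc_scheme \<Rightarrow> 'a \<Rightarrow> 'a \<Rightarrow> bool" where
  "rle X f g \<longleftrightarrow> f \<in> Arr X \<and> g \<in> Arr X \<and> Dom X f = Dom X g \<and> Cod X f = Cod X g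
                 \<and> Comp X (Rst X f) g = f"

definition nowhere_defined :: "('o,'a,'z) rdrc_scheme \<Rightarrow> 'o \<Rightarrow> 'o \<Rightarrow> 'a \<Rightarrow> bool" where
  "nowhere_defined X A B f \<longleftrightarrow> f \<in> hom X A B \<and> (\<forall>g\<in>hom X A B. rle X f g)"

definition disjoint :: "('o,'a,'z) rdrc_scheme \<Rightarrow> 'a \<Rightarrow> 'a \<Rightarrow> bool" where
  "disjoint X f g \<longleftrightarrow> nowhere_defined X (Dom X f) (Cod X g) (Comp X (Rst X f) g)"

definition is_join :: "('o,'a,'z) rdrc_scheme \<Rightarrow> 'o \<Rightarrow> 'o \<Rightarrow> 'a set \<Rightarrow> 'a \<Rightarrow> bool" where
  "is_join X A B F j \<longleftrightarrow> j \<in> hom X A B \<and> (\<forall>f\<in>F. rle X f j)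
      \<and> (\<forall>g\<in>hom X A B. (\<forall>f\<in>F. rle X f g) \<longrightarrow> rle X j g)"

text \<open>binary join of two parallel maps (the least upper bound, unique when it exists)\<close>
definition join2 :: "('o,'a,'z) rdrc_scheme \<Rightarrow> 'a \<Rightarrow> 'a \<Rightarrow> 'a" where
  "join2 X f g = (THE j. is_join X (Dom X f) (Cod X f) {f, g} j)"

definition ptimes :: "('o,'a,'z) rdrc_scheme \<Rightarrow> 'a \<Rightarrow> 'a \<Rightarrow> 'a" where
  "ptimes X f g = Pair X (Comp X (P0 X (Dom X f) (Dom X g)) f) (Comp X (P1 X (Dom X f) (Dom X g)) g)"

definition iota0 :: "('o,'a,'z) rdrc_scheme \<Rightarrow> 'o \<Rightarrow> 'o \<Rightarrow> 'a" where
  "iota0 X A B = Pair X (Id X A) (Zero X A B)"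

definition iota1 :: "('o,'a,'z) rdrc_scheme \<Rightarrow> 'o \<Rightarrow> 'o \<Rightarrow> 'a" where
  "iota1 X A B = Pair X (Zero X B A) (Id X B)"

definition is_category :: "('o,'a,'z) rdrc_scheme \<Rightarrow> bool" where
  "is_category X \<longleftrightarrow>
     (\<forall>f\<in>Arr X. Dom X f \<in> Obj X \<and> Cod X f \<in> Obj X)
   \<and> (\<forall>A\<in>Obj X. Id X A \<in> hom X A A)
   \<and> (\<forall>A\<in>Obj X. \<forall>B\<in>Obj X. \<forall>C\<in>Obj X. \<forall>f\<in>hom X A B. \<forall>g\<in>hom X B C. Comp X f g \<in> hom X A C)
   \<and> (\<forall>f\<in>Arr X. Comp X (Id X (Dom X f)) f = f \<and> Comp X f (Id X (Cod X f)) = f)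
   \<and> (\<forall>f\<in>Arr X. \<forall>g\<in>Arr X. \<forall>h\<in>Arr X. Cod X f = Dom X g \<longrightarrow> Cod X g = Dom X h \<longrightarrow>
        Comp X (Comp X f g) h = Comp X f (Comp X g h))"

definition is_restriction_category :: "('o,'a,'z) rdrc_scheme \<Rightarrow> bool" where
  "is_restriction_category X \<longleftrightarrow> is_category X
   \<and> (\<forall>f\<in>Arr X. Rst X f \<in> hom X (Dom X f) (Dom X f))
   \<and> (\<forall>f\<in>Arr X. Comp X (Rst X f) f = f)
   \<and> (\<forall>f\<in>Arr X. \<forall>g\<in>Arr X. Dom X f = Dom X g \<longrightarrow>
        Comp X (Rst X f) (Rst X g) = Comp X (Rst X g) (Rst X f))
   \<and> (\<forall>f\<in>Arr X. \<forall>g\<in>Arr X. Dom X f = Dom X g \<longrightarrow>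
        Rst X (Comp X (Rst X f) g) = Comp X (Rst X f) (Rst X g))
   \<and> (\<forall>f\<in>Arr X. \<forall>g\<in>Arr X. Cod X f = Dom X g \<longrightarrow>
        Comp X f (Rst X g) = Comp X (Rst X (Comp X f g)) f)"

definition has_restriction_products :: "('o,'a,'z) rdrc_scheme \<Rightarrow> bool" where
  "has_restriction_products X \<longleftrightarrow>
     Term X \<in> Obj X
   \<and> (\<forall>A\<in>Obj X. Bang X A \<in> hom X A (Term X) \<and> total X (Bang X A)
        \<and> (\<forall>f\<in>hom X A (Term X). f = Comp X (Rst X f) (Bang X A)))
   \<and> (\<forall>A\<in>Obj X. \<forall>B\<in>Obj X. Prod X A B \<in> Obj X
        \<and> P0 X A B \<in> hom X (Prod X A B) A \<and> total X (P0 X A B)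
        \<and> P1 X A B \<in> hom X (Prod X A B) B \<and> total X (P1 X A B)
        \<and> (\<forall>C\<in>Obj X. \<forall>f\<in>hom X C A. \<forall>g\<in>hom X C B.
             Pair X f g \<in> hom X C (Prod X A B)
           \<and> Comp X (Pair X f g) (P0 X A B) = Comp X (Rst X g) f
           \<and> Comp X (Pair X f g) (P1 X A B) = Comp X (Rst X f) g
           \<and> (\<forall>h\<in>hom X C (Prod X A B).
                Comp X h (P0 X A B) = Comp X (Rst X g) f \<and> Comp X h (P1 X A B) = Comp X (Rst X f) g
                \<longrightarrow> h = Pair X f g)))"

definition is_CLARC :: "('o,'a,'z) rdrc_scheme \<Rightarrow> bool" where
  "is_CLARC X \<longleftrightarrow> is_restriction_category X \<and> has_restriction_products X
   \<and> (\<forall>A\<in>Obj X. \<forall>B\<in>Obj X.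
        Zero X A B \<in> hom X A B \<and> Rst X (Zero X A B) = Id X A
      \<and> (\<forall>f\<in>hom X A B. \<forall>g\<in>hom X A B. Add X f g \<in> hom X A B
           \<and> Add X f g = Add X g f
           \<and> Rst X (Add X f g) = Comp X (Rst X f) (Rst X g))
      \<and> (\<forall>f\<in>hom X A B. Add X f (Zero X A B) = f)
      \<and> (\<forall>f\<in>hom X A B. \<forall>g\<in>hom X A B. \<forall>h\<in>hom X A B.
           Add X (Add X f g) h = Add X f (Add X g h)))
   \<and> (\<forall>A\<in>Obj X. \<forall>B\<in>Obj X. \<forall>C\<in>Obj X. \<forall>x\<in>hom X A B.
        (\<forall>f\<in>hom X B C. \<forall>g\<in>hom X B C. Comp X x (Add X f g) = Add X (Comp X x f) (Comp X x g))
      \<and> Comp X x (Zero X B C) = Comp X (Rst X x) (Zero X A C))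
   \<and> (\<forall>A\<in>Obj X. \<forall>B\<in>Obj X. \<forall>C\<in>Obj X.
        (\<forall>f\<in>hom X C (Prod X A B). \<forall>g\<in>hom X C (Prod X A B).
           Comp X (Add X f g) (P0 X A B) = Add X (Comp X f (P0 X A B)) (Comp X g (P0 X A B))
         \<and> Comp X (Add X f g) (P1 X A B) = Add X (Comp X f (P1 X A B)) (Comp X g (P1 X A B)))
      \<and> Comp X (Zero X C (Prod X A B)) (P0 X A B) = Zero X C A
      \<and> Comp X (Zero X C (Prod X A B)) (P1 X A B) = Zero X C B)"

definition is_basic_RDRC :: "('o,'a,'z) rdrc_scheme \<Rightarrow> bool" where
  "is_basic_RDRC X \<longleftrightarrow> is_CLARC X
   \<and> (\<forall>A\<in>Obj X. \<forall>B\<in>Obj X. \<forall>f\<in>hom X A B. RD X f \<in> hom X (Prod X A B) A)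
   \<comment> \<open>RD.1\<close>
   \<and> (\<forall>A\<in>Obj X. \<forall>B\<in>Obj X.
        (\<forall>f\<in>hom X A B. \<forall>g\<in>hom X A B. RD X (Add X f g) = Add X (RD X f) (RD X g))
      \<and> RD X (Zero X A B) = Zero X (Prod X A B) A)
   \<comment> \<open>RD.2\<close>
   \<and> (\<forall>A\<in>Obj X. \<forall>B\<in>Obj X. \<forall>C\<in>Obj X. \<forall>f\<in>hom X A B. \<forall>a\<in>hom X C A.
        (\<forall>b\<in>hom X C B. \<forall>c\<in>hom X C B.
           Comp X (Pair X a (Add X b c)) (RD X f)
             = Add X (Comp X (Pair X a b) (RD X f)) (Comp X (Pair X a c) (RD X f)))
      \<and> Comp X (Pair X a (Zero X C B)) (RD X f) = Comp X (Rst X (Comp X a f)) (Zero X C A))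
   \<comment> \<open>RD.3\<close>
   \<and> (\<forall>A\<in>Obj X. \<forall>B\<in>Obj X.
        RD X (P0 X A B) = Comp X (P1 X (Prod X A B) A) (iota0 X A B)
      \<and> RD X (P1 X A B) = Comp X (P1 X (Prod X A B) B) (iota1 X A B))
   \<comment> \<open>RD.4\<close>
   \<and> (\<forall>A\<in>Obj X. \<forall>B\<in>Obj X. \<forall>C\<in>Obj X. \<forall>f\<in>hom X C A. \<forall>g\<in>hom X C B.
        RD X (Pair X f g) = Add X (Comp X (ptimes X (Id X C) (P0 X A B)) (RD X f))
                                  (Comp X (ptimes X (Id X C) (P1 X A B)) (RD X g)))
   \<comment> \<open>RD.5\<close>
   \<and> (\<forall>A\<in>Obj X. \<forall>B\<in>Obj X. \<forall>C\<in>Obj X. \<forall>f\<in>hom X A B. \<forall>g\<in>hom X B C.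
        RD X (Comp X f g) = Comp X (Pair X (P0 X A C)
              (Comp X (Pair X (Comp X (P0 X A C) f) (P1 X A C)) (RD X g))) (RD X f))
   \<comment> \<open>RD.8 and RD.9\<close>
   \<and> (\<forall>A\<in>Obj X. \<forall>B\<in>Obj X. \<forall>f\<in>hom X A B.
        Rst X (RD X f) = ptimes X (Rst X f) (Id X B)
      \<and> RD X (Rst X f) = Comp X (ptimes X (Rst X f) (Id X A)) (P1 X A A))"

definition has_countable_disjoint_joins :: "('o,'a,'z) rdrc_scheme \<Rightarrow> bool" where
  "has_countable_disjoint_joins X \<longleftrightarrow>
     (\<forall>A\<in>Obj X. \<forall>B\<in>Obj X. \<forall>F. F \<subseteq> hom X A B \<and> countable F
        \<and> (\<forall>f\<in>F. \<forall>g\<in>F. f \<noteq> g \<longrightarrow> disjoint X f g) \<longrightarrow>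
        (\<exists>j. is_join X A B F j)
      \<and> (\<forall>j C D h k. is_join X A B F j \<and> C \<in> Obj X \<and> D \<in> Obj X
           \<and> h \<in> hom X C A \<and> k \<in> hom X B D \<longrightarrow>
           is_join X C D ((\<lambda>f. Comp X (Comp X h f) k) ` F) (Comp X (Comp X h j) k)))"

end

theory Submission
  imports Defs
begin

text \<open>Let \<open>s = \<langle>1, a\<rangle>\<close>, \<open>e = \<langle>s, v\<rangle>\<close> and \<open>j = rst b\<^sub>T m \<or> rst b\<^sub>F n\<close>.
  RD.5 and RD.9 give \<open>R[rst c f] = rst (\<pi>\<^sub>0 c) R[f]\<close>, hence
  \<open>e R[rst c f] = rst (s c) e R[f]\<close>: restricting a map restricts its reverse derivative
  at the base point.  For \<open>c = j\<close> this shows that \<open>e R[j] \<pi>\<^sub>1\<close> is already restricted to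
  \<open>rst (s j)\<close>, which is the disjoint join of \<open>rst (s (rst b\<^sub>T m))\<close> and
  \<open>rst (s (rst b\<^sub>F n))\<close>.  Distributing \<open>e R[j] \<pi>\<^sub>1\<close> over this join and using the
  identity again for \<open>c = rst b\<^sub>T m\<close> and \<open>c = rst b\<^sub>F n\<close> (where \<open>rst c j = c\<close>) yields
  the two branches.\<close>

locale basic_rdrc =
  fixes X :: "('o, 'a) rdrc"
  assumes basic_RDRC: "is_basic_RDRC X"
begin

abbreviation dcomp (infixl "\<cdot>" 75) where "f \<cdot> g \<equiv> Comp X f g"
abbreviation rst where "rst f \<equiv> Rst X f"

lemma CLARC: "is_CLARC X"
  using basic_RDRC unfolding is_basic_RDRC_def by blast

lemma restriction_category: "is_restriction_category X"
  using CLARC unfolding is_CLARC_def by blast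

lemma category: "is_category X"
  using restriction_category unfolding is_restriction_category_def by blast

lemma restriction_products: "has_restriction_products X"
  using CLARC unfolding is_CLARC_def by blast

lemma arr_dom [simp]: "f \<in> Arr X \<Longrightarrow> Dom X f \<in> Obj X"
  and arr_cod [simp]: "f \<in> Arr X \<Longrightarrow> Cod X f \<in> Obj X"
  using category unfolding is_category_def by blast+

lemma id_type [simp]:
  assumes "A \<in> Obj X"
  shows "Id X A \<in> Arr X" "Dom X (Id X A) = A" "Cod X (Id X A) = A"
  using assms category unfolding is_category_def hom_def by blast+

lemma comp_type [simp]:
  assumes "f \<in> Arr X" "g \<in> Arr X" "Cod X f = Dom X g"
  shows "f \<cdot> g \<in> Arr X" "Dom X (f \<cdot> g) = Dom X f" "Cod X (f \<cdot> g) = Cod X g"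
proof -
  have "f \<in> hom X (Dom X f) (Cod X f)" "g \<in> hom X (Cod X f) (Cod X g)"
    using assms unfolding hom_def by auto
  then have "f \<cdot> g \<in> hom X (Dom X f) (Cod X g)"
    using category assms unfolding is_category_def by (meson arr_cod arr_dom)
  then show "f \<cdot> g \<in> Arr X" "Dom X (f \<cdot> g) = Dom X f" "Cod X (f \<cdot> g) = Cod X g"
    unfolding hom_def by auto
qed

lemma comp_id_left: "f \<in> Arr X \<Longrightarrow> Dom X f = A \<Longrightarrow> Id X A \<cdot> f = f"
  and comp_id_right: "f \<in> Arr X \<Longrightarrow> Cod X f = A \<Longrightarrow> f \<cdot> Id X A = f"
  using category unfolding is_category_def by blast+

lemma comp_assoc:
  "f \<in> Arr X \<Longrightarrow> g \<in> Arr X \<Longrightarrow> h \<in> Arr X \<Longrightarrow> Cod X f = Dom X g \<Longrightarrow> Cod X g = Dom X h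
   \<Longrightarrow> f \<cdot> g \<cdot> h = f \<cdot> (g \<cdot> h)"
  using category unfolding is_category_def by blast

lemma rst_type [simp]:
  assumes "f \<in> Arr X"
  shows "rst f \<in> Arr X" "Dom X (rst f) = Dom X f" "Cod X (rst f) = Dom X f"
  using assms restriction_category unfolding is_restriction_category_def hom_def by blast+

lemma rst_comp_self: "f \<in> Arr X \<Longrightarrow> rst f \<cdot> f = f"
  using restriction_category unfolding is_restriction_category_def by blast

lemma rst_commute:
  "f \<in> Arr X \<Longrightarrow> g \<in> Arr X \<Longrightarrow> Dom X f = Dom X g \<Longrightarrow> rst f \<cdot> rst g = rst g \<cdot> rst f"
  using restriction_category unfolding is_restriction_category_def by blast

lemma rst_rst_comp:
  "f \<in> Arr X \<Longrightarrow> g \<in> Arr X \<Longrightarrow> Dom X f = Dom X g \<Longrightarrow> rst (rst f \<cdot> g) = rst f \<cdot> rst g"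
  using restriction_category unfolding is_restriction_category_def by blast

lemma comp_rst:
  "f \<in> Arr X \<Longrightarrow> g \<in> Arr X \<Longrightarrow> Cod X f = Dom X g \<Longrightarrow> f \<cdot> rst g = rst (f \<cdot> g) \<cdot> f"
  using restriction_category unfolding is_restriction_category_def by blast

lemma rst_id [simp]: "A \<in> Obj X \<Longrightarrow> rst (Id X A) = Id X A"
  using rst_comp_self[of "Id X A"] comp_id_right[of "rst (Id X A)" A] by simp

lemma rst_rst [simp]: "f \<in> Arr X \<Longrightarrow> rst (rst f) = rst f"
  using rst_rst_comp[of f "Id X (Dom X f)"] by (simp add: comp_id_right)

lemma rst_idem: "f \<in> Arr X \<Longrightarrow> rst f \<cdot> rst f = rst f"
  using rst_comp_self[of "rst f"] by simp

lemma rst_comp_rst: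
  assumes "f \<in> Arr X" "g \<in> Arr X" "Cod X f = Dom X g"
  shows "rst (f \<cdot> rst g) = rst (f \<cdot> g)"
proof -
  have "rst (f \<cdot> rst g) = rst (rst (f \<cdot> g) \<cdot> f)" using assms by (simp add: comp_rst)
  also have "\<dots> = rst f \<cdot> rst (f \<cdot> g)" using assms by (simp add: rst_rst_comp rst_commute)
  also have "\<dots> = rst (rst f \<cdot> (f \<cdot> g))" using assms by (simp add: rst_rst_comp)
  also have "\<dots> = rst (f \<cdot> g)" using assms by (simp flip: comp_assoc add: rst_comp_self)
  finally show ?thesis .
qed

lemma proj_type [simp]:
  assumes "A \<in> Obj X" "B \<in> Obj X"
  shows "Prod X A B \<in> Obj X"
    "P0 X A B \<in> Arr X" "Dom X (P0 X A B) = Prod X A B" "Cod X (P0 X A B) = A"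
    "P1 X A B \<in> Arr X" "Dom X (P1 X A B) = Prod X A B" "Cod X (P1 X A B) = B"
    "rst (P0 X A B) = Id X (Prod X A B)" "rst (P1 X A B) = Id X (Prod X A B)"
  using assms restriction_products unfolding has_restriction_products_def hom_def total_def
  by auto

lemma pair_universal:
  assumes "f \<in> Arr X" "g \<in> Arr X" "Dom X f = Dom X g"
  defines "A \<equiv> Cod X f" and "B \<equiv> Cod X g"
  shows "Pair X f g \<in> hom X (Dom X f) (Prod X A B)
    \<and> Pair X f g \<cdot> P0 X A B = rst g \<cdot> f \<and> Pair X f g \<cdot> P1 X A B = rst f \<cdot> g
    \<and> (\<forall>h\<in>hom X (Dom X f) (Prod X A B).
         h \<cdot> P0 X A B = rst g \<cdot> f \<and> h \<cdot> P1 X A B = rst f \<cdot> g \<longrightarrow> h = Pair X f g)"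
proof -
  have "f \<in> hom X (Dom X f) A" "g \<in> hom X (Dom X f) B"
    using assms unfolding hom_def by auto
  moreover have "A \<in> Obj X" "B \<in> Obj X" "Dom X f \<in> Obj X" using assms by auto
  ultimately show ?thesis
    using restriction_products unfolding has_restriction_products_def by blast
qed

lemma pair_type [simp]:
  assumes "f \<in> Arr X" "g \<in> Arr X" "Dom X f = Dom X g"
  shows "Pair X f g \<in> Arr X" "Dom X (Pair X f g) = Dom X f"
    "Cod X (Pair X f g) = Prod X (Cod X f) (Cod X g)"
  using pair_universal[OF assms] unfolding hom_def by blast+

lemma pair_P0: "f \<in> Arr X \<Longrightarrow> g \<in> Arr X \<Longrightarrow> Dom X f = Dom X g \<Longrightarrow> A = Cod X f \<Longrightarrow> B = Cod X g
   \<Longrightarrow> Pair X f g \<cdot> P0 X A B = rst g \<cdot> f"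
  and pair_P1: "f \<in> Arr X \<Longrightarrow> g \<in> Arr X \<Longrightarrow> Dom X f = Dom X g \<Longrightarrow> A = Cod X f \<Longrightarrow> B = Cod X g
   \<Longrightarrow> Pair X f g \<cdot> P1 X A B = rst f \<cdot> g"
  using pair_universal by blast+

lemma pair_unique:
  "f \<in> Arr X \<Longrightarrow> g \<in> Arr X \<Longrightarrow> Dom X f = Dom X g \<Longrightarrow> h \<in> Arr X \<Longrightarrow> Dom X h = Dom X f
   \<Longrightarrow> Cod X h = Prod X (Cod X f) (Cod X g)
   \<Longrightarrow> h \<cdot> P0 X (Cod X f) (Cod X g) = rst g \<cdot> f \<Longrightarrow> h \<cdot> P1 X (Cod X f) (Cod X g) = rst f \<cdot> g
   \<Longrightarrow> h = Pair X f g"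
  using pair_universal unfolding hom_def by blast

lemma rst_pair:
  assumes "f \<in> Arr X" "g \<in> Arr X" "Dom X f = Dom X g"
  shows "rst (Pair X f g) = rst f \<cdot> rst g"
proof -
  let ?p = "P0 X (Cod X f) (Cod X g)"
  have "rst (Pair X f g) = rst (Pair X f g \<cdot> rst ?p)" using assms by (simp add: comp_id_right)
  also have "\<dots> = rst (Pair X f g \<cdot> ?p)" using assms rst_comp_rst[of "Pair X f g" ?p] by simp
  also have "\<dots> = rst (rst g \<cdot> f)" using assms by (simp add: pair_P0)
  also have "\<dots> = rst f \<cdot> rst g" using assms by (simp add: rst_rst_comp rst_commute)
  finally show ?thesis .
qed

lemma rst_snd_comp_pair:
  assumes "s \<in> Arr X" "v \<in> Arr X" "Dom X s = Dom X v"
  shows "rst v \<cdot> Pair X s v = Pair X s v"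
proof -
  have "rst v \<cdot> Pair X s v = rst v \<cdot> (rst s \<cdot> rst v) \<cdot> Pair X s v"
    using assms rst_comp_self[of "Pair X s v"] by (simp add: rst_pair comp_assoc)
  also have "rst v \<cdot> (rst s \<cdot> rst v) = rst s \<cdot> rst v"
    using assms by (simp flip: comp_assoc add: rst_commute[of v s] comp_assoc rst_idem)
  finally show ?thesis
    using assms rst_comp_self[of "Pair X s v"] by (simp add: rst_pair)
qed

subsection \<open>Reverse derivatives of restricted maps\<close>

lemma RD_type [simp]:
  assumes "f \<in> Arr X"
  shows "RD X f \<in> Arr X" "Dom X (RD X f) = Prod X (Dom X f) (Cod X f)" "Cod X (RD X f) = Dom X f"
proof -
  have "\<forall>A\<in>Obj X. \<forall>B\<in>Obj X. \<forall>f\<in>hom X A B. RD X f \<in> hom X (Prod X A B) A"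
    using basic_RDRC unfolding is_basic_RDRC_def by (elim conjE)
  moreover have "f \<in> hom X (Dom X f) (Cod X f)" using assms unfolding hom_def by simp
  ultimately have "RD X f \<in> hom X (Prod X (Dom X f) (Cod X f)) (Dom X f)"
    using assms by simp
  then show "RD X f \<in> Arr X" "Dom X (RD X f) = Prod X (Dom X f) (Cod X f)" "Cod X (RD X f) = Dom X f"
    unfolding hom_def by auto
qed

lemma RD_comp:
  assumes "f \<in> Arr X" "g \<in> Arr X" "Cod X f = Dom X g"
  defines "\<pi>\<^sub>0 \<equiv> P0 X (Dom X f) (Cod X g)" and "\<pi>\<^sub>1 \<equiv> P1 X (Dom X f) (Cod X g)"
  shows "RD X (f \<cdot> g) = Pair X \<pi>\<^sub>0 (Pair X (\<pi>\<^sub>0 \<cdot> f) \<pi>\<^sub>1 \<cdot> RD X g) \<cdot> RD X f"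
proof -
  have "f \<in> hom X (Dom X f) (Cod X f)" "g \<in> hom X (Cod X f) (Cod X g)"
    using assms unfolding hom_def by auto
  then show ?thesis
    using basic_RDRC assms unfolding is_basic_RDRC_def \<pi>\<^sub>0_def \<pi>\<^sub>1_def by (meson arr_cod arr_dom)
qed

lemma RD_rst:
  assumes "f \<in> Arr X"
  shows "RD X (rst f) = ptimes X (rst f) (Id X (Dom X f)) \<cdot> P1 X (Dom X f) (Dom X f)"
proof -
  have "f \<in> hom X (Dom X f) (Cod X f)" using assms unfolding hom_def by auto
  then show ?thesis using basic_RDRC assms unfolding is_basic_RDRC_def by (meson arr_cod arr_dom)
qed

lemma pair_P0_rst_P1:
  assumes "c \<in> Arr X" "Dom X c = A" "B \<in> Obj X"
  shows "Pair X (P0 X A B \<cdot> rst c) (P1 X A B) = rst (P0 X A B \<cdot> rst c)"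
proof -
  have A: "A \<in> Obj X" using assms by auto
  show ?thesis
  proof (rule sym, rule pair_unique)
    show "rst (P0 X A B \<cdot> rst c) \<cdot> P0 X (Cod X (P0 X A B \<cdot> rst c)) (Cod X (P1 X A B))
        = rst (P1 X A B) \<cdot> (P0 X A B \<cdot> rst c)"
      using assms A comp_rst[of "P0 X A B" "rst c"] by (simp add: comp_id_left)
  qed (use assms A in simp_all)
qed

lemma RD_rst_comp:
  assumes c: "c \<in> Arr X" and f: "f \<in> Arr X" "Dom X c = Dom X f"
  shows "RD X (rst c \<cdot> f) = rst (P0 X (Dom X f) (Cod X f) \<cdot> c) \<cdot> RD X f"
proof -
  let ?A = "Dom X f" and ?T = "Cod X f" and ?c = "rst c"
  let ?\<pi>\<^sub>0 = "P0 X ?A ?T" and ?\<pi>\<^sub>1 = "P1 X ?A ?T" and ?p\<^sub>0 = "P0 X ?A ?A" and ?p\<^sub>1 = "P1 X ?A ?A"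
  let ?r = "rst (?\<pi>\<^sub>0 \<cdot> ?c)" and ?Y = "Pair X (?\<pi>\<^sub>0 \<cdot> ?c) ?\<pi>\<^sub>1 \<cdot> RD X f"
  have Y: "?Y \<in> Arr X" "Dom X ?Y = Prod X ?A ?T" "Cod X ?Y = ?A" using c f by simp_all
  have "RD X (?c \<cdot> f) = Pair X ?\<pi>\<^sub>0 ?Y \<cdot> RD X ?c" using RD_comp[of ?c f] c f by simp
  also have "RD X ?c = rst (?p\<^sub>0 \<cdot> ?c) \<cdot> ?p\<^sub>1"
    using RD_rst[of c] c f by (simp add: ptimes_def comp_id_right pair_P1)
  also have "Pair X ?\<pi>\<^sub>0 ?Y \<cdot> (rst (?p\<^sub>0 \<cdot> ?c) \<cdot> ?p\<^sub>1)
      = rst (Pair X ?\<pi>\<^sub>0 ?Y \<cdot> ?p\<^sub>0 \<cdot> ?c) \<cdot> (Pair X ?\<pi>\<^sub>0 ?Y \<cdot> ?p\<^sub>1)"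
    using c f Y by (simp add: comp_assoc comp_rst[of "Pair X ?\<pi>\<^sub>0 ?Y"] flip: comp_assoc)
  also have "\<dots> = rst (rst ?Y \<cdot> (?\<pi>\<^sub>0 \<cdot> ?c)) \<cdot> ?Y"
    using c f Y by (simp add: pair_P0 pair_P1 comp_id_left comp_assoc)
  also have "\<dots> = ?r \<cdot> (rst ?Y \<cdot> ?Y)"
    using c f Y by (simp add: rst_rst_comp rst_commute[of ?Y] comp_assoc)
  also have "\<dots> = ?r \<cdot> (?r \<cdot> RD X f)"
    using c f Y by (simp add: rst_comp_self pair_P0_rst_P1)
  also have "\<dots> = ?r \<cdot> RD X f" using c f by (simp add: rst_idem flip: comp_assoc)
  also have "?r = rst (?\<pi>\<^sub>0 \<cdot> c)" using c f by (simp add: rst_comp_rst)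
  finally show ?thesis .
qed

lemma pair_RD_rst_comp:
  assumes s: "s \<in> Arr X" and v: "v \<in> Arr X" "Dom X s = Dom X v"
    and c: "c \<in> Arr X" "Dom X c = Cod X s"
    and f: "f \<in> Arr X" "Dom X f = Cod X s" "Cod X f = Cod X v"
  shows "Pair X s v \<cdot> RD X (rst c \<cdot> f) = rst (s \<cdot> c) \<cdot> (Pair X s v \<cdot> RD X f)"
proof -
  let ?e = "Pair X s v" and ?\<pi>\<^sub>0 = "P0 X (Cod X s) (Cod X v)"
  have "?e \<cdot> RD X (rst c \<cdot> f) = ?e \<cdot> rst (?\<pi>\<^sub>0 \<cdot> c) \<cdot> RD X f"
    using RD_rst_comp[of c f] s v c f by (simp add: comp_assoc)
  also have "\<dots> = rst (?e \<cdot> ?\<pi>\<^sub>0 \<cdot> c) \<cdot> ?e \<cdot> RD X f"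
    using s v c f by (simp add: comp_rst comp_assoc)
  also have "rst (?e \<cdot> ?\<pi>\<^sub>0 \<cdot> c) = rst (s \<cdot> c) \<cdot> rst v"
    using s v c f by (simp add: pair_P0 comp_assoc rst_rst_comp rst_commute[of v])
  also have "rst (s \<cdot> c) \<cdot> rst v \<cdot> ?e \<cdot> RD X f = rst (s \<cdot> c) \<cdot> (?e \<cdot> RD X f)"
    using s v c f comp_assoc[of "rst (s \<cdot> c)" "rst v" ?e]
    by (simp add: rst_snd_comp_pair comp_assoc)
  finally show ?thesis .
qed

subsection \<open>Order and joins\<close>

lemma rle_antisym: "rle X f g \<Longrightarrow> rle X g f \<Longrightarrow> f = g"
proof -
  assume "rle X f g" "rle X g f"
  then have f: "f \<in> Arr X" "g \<in> Arr X" "Dom X f = Dom X g"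
    and fg: "rst f \<cdot> g = f" and gf: "rst g \<cdot> f = g" unfolding rle_def by auto
  have "f = rst f \<cdot> rst g \<cdot> f" using f fg gf by (simp add: comp_assoc)
  also have "\<dots> = rst g \<cdot> rst f \<cdot> f" using f by (simp add: rst_commute)
  also have "\<dots> = rst g \<cdot> f" using f by (simp add: comp_assoc rst_comp_self)
  finally show ?thesis using gf by simp
qed

lemma join_unique:
  assumes "is_join X A B F j" "is_join X A B F j'"
  shows "j = j'"
proof (rule rle_antisym)
  show "rle X j j'" "rle X j' j" using assms unfolding is_join_def by blast+
qed

lemma join2_eq: "is_join X (Dom X f) (Cod X f) {f, g} j \<Longrightarrow> join2 X f g = j"
  unfolding join2_def by (rule the_equality, assumption, rule join_unique)

lemma rle_id_iff:
  "J \<in> Arr X \<Longrightarrow> Dom X J = A \<Longrightarrow> Cod X J = A \<Longrightarrow> rle X J (Id X A) \<longleftrightarrow> rst J = J"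
  unfolding rle_def by (auto simp: comp_id_right)

lemma nowhere_defined_iff_empty_join: "nowhere_defined X A B z \<longleftrightarrow> is_join X A B {} z"
  unfolding nowhere_defined_def is_join_def by auto

lemma nowhere_defined_unique:
  "nowhere_defined X A B z \<Longrightarrow> nowhere_defined X A B z' \<Longrightarrow> z = z'"
  unfolding nowhere_defined_iff_empty_join by (rule join_unique)

lemma nowhere_defined_type:
  "nowhere_defined X A B z \<Longrightarrow> z \<in> Arr X \<and> Dom X z = A \<and> Cod X z = B"
  unfolding nowhere_defined_def hom_def by auto

end

locale basic_rdrc_with_joins = basic_rdrc +
  assumes countable_disjoint_joins: "has_countable_disjoint_joins X"
begin

lemma countable_disjoint_joinsD:
  assumes "A \<in> Obj X" "B \<in> Obj X" "F \<subseteq> hom X A B" "countable F" "pairwise (disjoint X) F"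
  shows "(\<exists>j. is_join X A B F j)
    \<and> (\<forall>j C D h k. is_join X A B F j \<and> C \<in> Obj X \<and> D \<in> Obj X
         \<and> h \<in> hom X C A \<and> k \<in> hom X B D \<longrightarrow>
         is_join X C D ((\<lambda>f. h \<cdot> f \<cdot> k) ` F) (h \<cdot> j \<cdot> k))"
  using countable_disjoint_joins assms unfolding has_countable_disjoint_joins_def pairwise_def
  by simp

lemma join_exists:
  "A \<in> Obj X \<Longrightarrow> B \<in> Obj X \<Longrightarrow> F \<subseteq> hom X A B \<Longrightarrow> countable F \<Longrightarrow> pairwise (disjoint X) F
   \<Longrightarrow> \<exists>j. is_join X A B F j"
  using countable_disjoint_joinsD by blast

lemma comp_join:
  assumes "F \<subseteq> hom X A B" "countable F" "pairwise (disjoint X) F" "is_join X A B F j"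
    and "h \<in> hom X C A" "k \<in> hom X B D"
  shows "is_join X C D ((\<lambda>f. h \<cdot> f \<cdot> k) ` F) (h \<cdot> j \<cdot> k)"
proof -
  have "A \<in> Obj X" "B \<in> Obj X" "C \<in> Obj X" "D \<in> Obj X"
    using assms(5,6) unfolding hom_def by auto
  then show ?thesis using countable_disjoint_joinsD[OF _ _ assms(1-3)] assms(4-6) by blast
qed

lemma nowhere_defined_exists: "A \<in> Obj X \<Longrightarrow> B \<in> Obj X \<Longrightarrow> \<exists>z. nowhere_defined X A B z"
  unfolding nowhere_defined_iff_empty_join by (rule join_exists) auto

lemma nowhere_defined_comp:
  assumes "nowhere_defined X A B z" "h \<in> hom X C A" "k \<in> hom X B D"
  shows "nowhere_defined X C D (h \<cdot> z \<cdot> k)"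
  using comp_join[of "{}" A B z h C k D] assms
  unfolding nowhere_defined_iff_empty_join by simp

lemma nowhere_defined_comp_right:
  assumes z: "nowhere_defined X A B z" and k: "k \<in> hom X B D"
  shows "nowhere_defined X A D (z \<cdot> k)"
proof -
  have "A \<in> Obj X" "z \<in> Arr X" "Dom X z = A" using nowhere_defined_type[OF z] by auto
  then show ?thesis
    using nowhere_defined_comp[OF z _ k, of "Id X A" A] by (simp add: hom_def comp_id_left)
qed

lemma nowhere_defined_comp_left:
  assumes z: "nowhere_defined X A B z" and h: "h \<in> hom X C A"
  shows "nowhere_defined X C B (h \<cdot> z)"
proof -
  have "B \<in> Obj X" "z \<in> Arr X" "Cod X z = B" using nowhere_defined_type[OF z] by auto
  moreover have "h \<in> Arr X" "Cod X h = A" using h unfolding hom_def by auto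
  ultimately show ?thesis
    using nowhere_defined_comp[OF z h, of "Id X B" B] nowhere_defined_type[OF z]
    by (simp add: hom_def comp_id_right)
qed

text \<open>The nowhere-defined endomorphism \<open>z\<^sub>0\<close> of \<open>A\<close> is a restriction idempotent with
  \<open>z = z\<^sub>0 z\<close>, so \<open>rst z = z\<^sub>0 rst z\<close>.\<close>

lemma nowhere_defined_rst:
  assumes z: "nowhere_defined X A B z"
  shows "nowhere_defined X A A (rst z)"
proof -
  have zt: "z \<in> Arr X" "Dom X z = A" "Cod X z = B" using nowhere_defined_type[OF z] by auto
  then have AB: "A \<in> Obj X" "B \<in> Obj X" by auto
  obtain z\<^sub>0 where z\<^sub>0: "nowhere_defined X A A z\<^sub>0" using nowhere_defined_exists AB by blast
  have z\<^sub>0t: "z\<^sub>0 \<in> Arr X" "Dom X z\<^sub>0 = A" "Cod X z\<^sub>0 = A" using nowhere_defined_type[OF z\<^sub>0] by auto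
  have zhom: "z \<in> hom X A B" using zt unfolding hom_def by simp
  have "z = z\<^sub>0 \<cdot> z"
    using nowhere_defined_unique[OF z nowhere_defined_comp_right[OF z\<^sub>0 zhom]] .
  moreover have "rst z\<^sub>0 = z\<^sub>0"
  proof -
    have "Id X A \<in> hom X A A" using AB unfolding hom_def by simp
    then have "rle X z\<^sub>0 (Id X A)" using z\<^sub>0 unfolding nowhere_defined_def by blast
    then show ?thesis using rle_id_iff z\<^sub>0t by blast
  qed
  ultimately have "rst z = z\<^sub>0 \<cdot> rst z" using rst_rst_comp[of z\<^sub>0 z] z\<^sub>0t zt by simp
  then show ?thesis
    using nowhere_defined_comp_right[OF z\<^sub>0, of "rst z" A] zt unfolding hom_def by simp
qed

lemma disjoint_if_nowhere_defined_rst: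
  assumes f: "f \<in> hom X A B" and g: "g \<in> hom X A B"
    and z: "nowhere_defined X A A (rst f \<cdot> rst g)"
  shows "disjoint X f g"
proof -
  have ft: "f \<in> Arr X" "Dom X f = A" and gt: "g \<in> Arr X" "Dom X g = A" "Cod X g = B"
    using f g unfolding hom_def by auto
  have "rst f \<cdot> g = rst f \<cdot> rst g \<cdot> g" using ft gt by (simp add: comp_assoc rst_comp_self)
  then show ?thesis
    using nowhere_defined_comp_right[OF z g] ft gt unfolding disjoint_def by simp
qed

lemma pairwise_disjoint_pair:
  assumes f: "f \<in> hom X A B" and g: "g \<in> hom X A B"
    and z: "nowhere_defined X A A (rst f \<cdot> rst g)"
  shows "pairwise (disjoint X) {f, g}"
proof -
  have "rst f \<cdot> rst g = rst g \<cdot> rst f" using f g unfolding hom_def by (simp add: rst_commute)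
  then show ?thesis
    using disjoint_if_nowhere_defined_rst[OF f g z] disjoint_if_nowhere_defined_rst[OF g f] z
    unfolding pairwise_def by auto
qed

lemma join_exists_pair:
  assumes "f \<in> hom X A B" "g \<in> hom X A B" "nowhere_defined X A A (rst f \<cdot> rst g)"
  shows "\<exists>j. is_join X A B {f, g} j"
proof -
  have "A \<in> Obj X" "B \<in> Obj X" using assms(1) unfolding hom_def by auto
  then show ?thesis using join_exists pairwise_disjoint_pair[OF assms] assms(1,2) by simp
qed

lemma comp_join_pair:
  assumes "f \<in> hom X A B" "g \<in> hom X A B" "nowhere_defined X A A (rst f \<cdot> rst g)"
    and "is_join X A B {f, g} j" "h \<in> hom X C A" "k \<in> hom X B D"
  shows "is_join X C D {h \<cdot> f \<cdot> k, h \<cdot> g \<cdot> k} (h \<cdot> j \<cdot> k)"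
  using comp_join[of "{f, g}"] pairwise_disjoint_pair[OF assms(1-3)] assms by simp

lemma join2_comp_right:
  assumes "f \<in> hom X A B" "g \<in> hom X A B" "nowhere_defined X A A (rst f \<cdot> rst g)"
    and j: "is_join X A B {f, g} j" and k: "k \<in> hom X B D"
  shows "join2 X (f \<cdot> k) (g \<cdot> k) = j \<cdot> k"
proof (rule join2_eq)
  have f: "f \<in> Arr X" "Dom X f = A" "Cod X f = B" and g: "g \<in> Arr X" "Dom X g = A" "Cod X g = B"
    and j': "j \<in> Arr X" "Dom X j = A" and k': "k \<in> Arr X" "Dom X k = B" "Cod X k = D"
    using assms unfolding is_join_def hom_def by auto
  then have "A \<in> Obj X" "Id X A \<in> hom X A A" unfolding hom_def by auto
  then show "is_join X (Dom X (f \<cdot> k)) (Cod X (f \<cdot> k)) {f \<cdot> k, g \<cdot> k} (j \<cdot> k)"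
    using comp_join_pair[OF assms(1-3) j _ k, of "Id X A" A] f g j' k'
    by (simp add: comp_id_left)
qed

lemma rst_join_pair:
  assumes j: "is_join X A B {f, g} j" and f: "f \<in> hom X A B" and g: "g \<in> hom X A B"
    and z: "nowhere_defined X A A (rst f \<cdot> rst g)"
  shows "is_join X A A {rst f, rst g} (rst j)"
proof -
  have ft: "f \<in> Arr X" "Dom X f = A" "Cod X f = B" and gt: "g \<in> Arr X" "Dom X g = A"
    and jt: "j \<in> Arr X" "Dom X j = A" "Cod X j = B"
    using f g j unfolding hom_def is_join_def by auto
  have fj: "rst f \<cdot> j = f" and gj: "rst g \<cdot> j = g" using j unfolding is_join_def rle_def by auto
  have rfg: "rst f \<in> hom X A A" "rst g \<in> hom X A A" using ft gt unfolding hom_def by auto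
  have z': "nowhere_defined X A A (rst (rst f) \<cdot> rst (rst g))" using z ft gt by simp
  obtain J where J: "is_join X A A {rst f, rst g} J" using join_exists_pair[OF rfg z'] by blast
  have Jt: "J \<in> Arr X" "Dom X J = A" "Cod X J = A" using J unfolding is_join_def hom_def by auto
  have "join2 X (rst f \<cdot> j) (rst g \<cdot> j) = J \<cdot> j"
    using join2_comp_right[OF rfg z' J, of j B] jt unfolding hom_def by simp
  moreover have "join2 X (rst f \<cdot> j) (rst g \<cdot> j) = j" using join2_eq j fj gj ft by simp
  ultimately have Jj: "J \<cdot> j = j" by simp
  have "rle X (rst f) (Id X A)" "rle X (rst g) (Id X A)" using rle_id_iff ft gt by simp_all
  moreover have "Id X A \<in> hom X A A" using ft unfolding hom_def by auto
  ultimately have "rle X J (Id X A)" using J unfolding is_join_def by blast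
  then have rJ: "rst J = J" using rle_id_iff Jt by blast
  have "rst f \<cdot> rst j = rst f" "rst g \<cdot> rst j = rst g"
    using rst_rst_comp[of f j] rst_rst_comp[of g j] ft gt jt fj gj by simp_all
  then have "\<forall>x\<in>{rst f, rst g}. rle X x (rst j)" using ft gt jt unfolding rle_def by auto
  then have "J \<cdot> rst j = J" using J rJ jt unfolding is_join_def rle_def hom_def by auto
  moreover have "rst j = J \<cdot> rst j" using rst_rst_comp[of J j] Jj rJ Jt jt by simp
  ultimately show ?thesis using J by simp
qed

lemma nowhere_defined_rst_rst_comp:
  assumes z: "nowhere_defined X A A (rst p \<cdot> rst q)"
    and p: "p \<in> Arr X" "Dom X p = A" and q: "q \<in> Arr X" "Dom X q = A"
    and f: "f \<in> Arr X" "Dom X f = A" and g: "g \<in> Arr X" "Dom X g = A"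
  shows "nowhere_defined X A A (rst (rst p \<cdot> f) \<cdot> rst (rst q \<cdot> g))"
proof -
  note ty = p q f g
  have "rst (rst p \<cdot> f) \<cdot> rst (rst q \<cdot> g) = rst p \<cdot> (rst f \<cdot> rst q) \<cdot> rst g"
    using ty by (simp add: rst_rst_comp comp_assoc)
  also have "\<dots> = rst p \<cdot> rst q \<cdot> (rst f \<cdot> rst g)"
    using ty by (simp add: rst_commute[of f q] comp_assoc)
  finally show ?thesis
    using nowhere_defined_comp_right[OF z, of "rst f \<cdot> rst g" A] ty unfolding hom_def by simp
qed

lemma nowhere_defined_rst_precomp:
  assumes z: "nowhere_defined X A A (rst f \<cdot> rst g)"
    and f: "f \<in> Arr X" "Dom X f = A" and g: "g \<in> Arr X" "Dom X g = A" and h: "h \<in> hom X C A"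
  shows "nowhere_defined X C C (rst (h \<cdot> f) \<cdot> rst (h \<cdot> g))"
proof -
  have h': "h \<in> Arr X" "Cod X h = A" using h unfolding hom_def by auto
  note ty = f g h'
  have "rst (h \<cdot> f) \<cdot> rst (h \<cdot> g) = rst (rst (h \<cdot> f) \<cdot> h \<cdot> g)"
    using ty by (simp add: rst_rst_comp comp_assoc)
  also have "\<dots> = rst (h \<cdot> rst f \<cdot> rst g)"
    using ty rst_comp_rst[of "h \<cdot> rst f" g] by (simp add: comp_rst)
  finally show ?thesis
    using nowhere_defined_rst[OF nowhere_defined_comp_left[OF z h]] ty by (simp add: comp_assoc)
qed

subsection \<open>Reverse derivative of a guarded disjoint join\<close>

lemma pair_RD_guarded_join2:
  assumes b\<^sub>1: "b\<^sub>1 \<in> Arr X" "Dom X b\<^sub>1 = A" and b\<^sub>2: "b\<^sub>2 \<in> Arr X" "Dom X b\<^sub>2 = A"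
    and disj: "nowhere_defined X A A (rst b\<^sub>1 \<cdot> rst b\<^sub>2)"
    and m\<^sub>1: "m\<^sub>1 \<in> hom X A T" and m\<^sub>2: "m\<^sub>2 \<in> hom X A T"
    and s: "s \<in> hom X C A" and v: "v \<in> hom X C T" and k: "k \<in> hom X A D"
  shows "Pair X s v \<cdot> RD X (join2 X (rst b\<^sub>1 \<cdot> m\<^sub>1) (rst b\<^sub>2 \<cdot> m\<^sub>2)) \<cdot> k
       = join2 X (rst (s \<cdot> b\<^sub>1) \<cdot> (Pair X s v \<cdot> RD X m\<^sub>1 \<cdot> k))
                 (rst (s \<cdot> b\<^sub>2) \<cdot> (Pair X s v \<cdot> RD X m\<^sub>2 \<cdot> k))"
proof -
  let ?f\<^sub>1 = "rst b\<^sub>1 \<cdot> m\<^sub>1" and ?f\<^sub>2 = "rst b\<^sub>2 \<cdot> m\<^sub>2" and ?e = "Pair X s v"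
  have m': "m\<^sub>1 \<in> Arr X" "Dom X m\<^sub>1 = A" "Cod X m\<^sub>1 = T" "m\<^sub>2 \<in> Arr X" "Dom X m\<^sub>2 = A" "Cod X m\<^sub>2 = T"
    and s': "s \<in> Arr X" "Dom X s = C" "Cod X s = A" and v': "v \<in> Arr X" "Dom X v = C" "Cod X v = T"
    and k': "k \<in> Arr X" "Dom X k = A" "Cod X k = D"
    using m\<^sub>1 m\<^sub>2 s v k unfolding hom_def by auto
  have "T \<in> Obj X" using m' by auto
  note ty = b\<^sub>1 b\<^sub>2 m' s' v' k' this
  have f: "?f\<^sub>1 \<in> hom X A T" "?f\<^sub>2 \<in> hom X A T" using ty unfolding hom_def by simp_all
  have disj_f: "nowhere_defined X A A (rst ?f\<^sub>1 \<cdot> rst ?f\<^sub>2)"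
    using nowhere_defined_rst_rst_comp[OF disj] ty by simp
  obtain j where j: "is_join X A T {?f\<^sub>1, ?f\<^sub>2} j" using join_exists_pair[OF f disj_f] by blast
  have jt: "j \<in> Arr X" "Dom X j = A" "Cod X j = T" using j unfolding is_join_def hom_def by auto
  have join2_f: "join2 X ?f\<^sub>1 ?f\<^sub>2 = j" using join2_eq j ty by simp
  have sj: "is_join X C T {s \<cdot> ?f\<^sub>1, s \<cdot> ?f\<^sub>2} (s \<cdot> j)"
    using comp_join_pair[OF f disj_f j s, of "Id X T" T] ty jt by (simp add: hom_def comp_id_right)
  have disj_sf: "nowhere_defined X C C (rst (s \<cdot> ?f\<^sub>1) \<cdot> rst (s \<cdot> ?f\<^sub>2))"
    using nowhere_defined_rst_precomp[OF disj_f _ _ _ _ s] ty by simp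
  have rst_sj: "is_join X C C {rst (s \<cdot> ?f\<^sub>1), rst (s \<cdot> ?f\<^sub>2)} (rst (s \<cdot> j))"
    using rst_join_pair[OF sj _ _ disj_sf] ty by (simp add: hom_def)
  let ?L = "?e \<cdot> RD X j \<cdot> k"
  have restrict: "rst (s \<cdot> c) \<cdot> ?L = ?e \<cdot> RD X c \<cdot> k" if "rle X c j" for c
  proof -
    have c: "c \<in> Arr X" "Dom X c = A" "rst c \<cdot> j = c" using that jt unfolding rle_def by auto
    have "rst (s \<cdot> c) \<cdot> ?L = rst (s \<cdot> c) \<cdot> (?e \<cdot> RD X j) \<cdot> k" using ty jt c by (simp add: comp_assoc)
    also have "\<dots> = ?e \<cdot> RD X (rst c \<cdot> j) \<cdot> k" using pair_RD_rst_comp[of s v c j] ty jt c by simp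
    finally show ?thesis using c by simp
  qed
  have guarded: "?e \<cdot> RD X (rst b \<cdot> m) \<cdot> k = rst (s \<cdot> b) \<cdot> (?e \<cdot> RD X m \<cdot> k)"
    if "b \<in> Arr X" "Dom X b = A" "m \<in> Arr X" "Dom X m = A" "Cod X m = T" for b m
    using pair_RD_rst_comp[of s v b m] ty that by (simp add: comp_assoc)
  have "?e \<cdot> RD X (join2 X ?f\<^sub>1 ?f\<^sub>2) \<cdot> k = rst (s \<cdot> j) \<cdot> ?L"
    using restrict[of j] jt join2_f unfolding rle_def by (simp add: rst_comp_self)
  also have "\<dots> = join2 X (rst (s \<cdot> ?f\<^sub>1) \<cdot> ?L) (rst (s \<cdot> ?f\<^sub>2) \<cdot> ?L)"
    using join2_comp_right[OF _ _ _ rst_sj, of ?L D] disj_sf ty jt by (simp add: hom_def)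
  also have "\<dots> = join2 X (?e \<cdot> RD X ?f\<^sub>1 \<cdot> k) (?e \<cdot> RD X ?f\<^sub>2 \<cdot> k)"
    using restrict j unfolding is_join_def by simp
  also have "\<dots> = join2 X (rst (s \<cdot> b\<^sub>1) \<cdot> (?e \<cdot> RD X m\<^sub>1 \<cdot> k)) (rst (s \<cdot> b\<^sub>2) \<cdot> (?e \<cdot> RD X m\<^sub>2 \<cdot> k))"
    using guarded ty by simp
  finally show ?thesis .
qed

end

theorem mainTheorem3:
  fixes X :: "('o, 'a) rdrc"
    and \<Gamma> U T :: 'o and bT bF m n a v :: 'a
  assumes "is_basic_RDRC X"
    and "has_countable_disjoint_joins X"
    and "\<Gamma> \<in> Obj X" and "U \<in> Obj X" and "T \<in> Obj X"
    and "bT \<in> hom X (Prod X \<Gamma> U) (Term X)" and "bF \<in> hom X (Prod X \<Gamma> U) (Term X)"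
    and "nowhere_defined X (Prod X \<Gamma> U) (Prod X \<Gamma> U) (Comp X (Rst X bT) (Rst X bF))"
    and "m \<in> hom X (Prod X \<Gamma> U) T" and "n \<in> hom X (Prod X \<Gamma> U) T"
    and "a \<in> hom X \<Gamma> U" and "v \<in> hom X \<Gamma> T"
  shows "Comp X (Comp X (Pair X (Pair X (Id X \<Gamma>) a) v)
                  (RD X (join2 X (Comp X (Rst X bT) m) (Comp X (Rst X bF) n))))
                (P1 X \<Gamma> U)
       = join2 X
           (Comp X (Rst X (Comp X (Pair X (Id X \<Gamma>) a) bT))
              (Comp X (Comp X (Pair X (Pair X (Id X \<Gamma>) a) v) (RD X m)) (P1 X \<Gamma> U)))
           (Comp X (Rst X (Comp X (Pair X (Id X \<Gamma>) a) bF))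
              (Comp X (Comp X (Pair X (Pair X (Id X \<Gamma>) a) v) (RD X n)) (P1 X \<Gamma> U)))"
proof -
  interpret basic_rdrc_with_joins X using assms(1,2) by unfold_locales
  have b: "bT \<in> Arr X" "Dom X bT = Prod X \<Gamma> U" "bF \<in> Arr X" "Dom X bF = Prod X \<Gamma> U"
    using assms(6,7) unfolding hom_def by auto
  have "Pair X (Id X \<Gamma>) a \<in> hom X \<Gamma> (Prod X \<Gamma> U)" "P1 X \<Gamma> U \<in> hom X (Prod X \<Gamma> U) U"
    using assms(3,4,11) unfolding hom_def by auto
  then show ?thesis
    using pair_RD_guarded_join2[OF b assms(8-10)] assms(12) by blast
qed

end
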